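(* Let $M=(\mathbf{D},\mathbf{I},\Sigma,\sim)$ be a $k$-sight model, $\sigma\in\Sigma$, and $\{z,z'\}=\{x,y\}$. If $M,\sigma\models K_zz'$, then $M,\sigma\models [z]K_zz'$.
   Context: Vocabulary: $Pred$ set of predicate symbols with arities containing a binary symbol $R$; $Cons$ nonempty finite set of constants; $Var=\{x,y\}$. A model is $M=(\mathbf{D},\mathbf{I},\Sigma,\sim)$: $\mathbf{D}$ nonempty finite; $\mathbf{I}(P)\subseteq\mathbf{D}^m$ for $m$-ary $P$, with $\mathbf{R}:=\mathbf{I}(R)$ serial; $\mathbf{I}(c)\in\mathbf{D}$ for $c\in Cons$, every element of $\mathbf{D}$ being some $\mathbf{I}(c)$; $\Sigma\subseteq\mathbf{D}^{Var}$ a nonempty set of assignments (situations); $\sim_x,\sim_y$ equivalence relations on $\Sigma$. Fix a natural number $k$. For $s\in\mathbf{D}$: $\mathbb{D}^0(s)=\{s\}$, $\mathbb{D}^{m+1}(s)=\mathbb{D}^m(s)\cup\{t:\exists u\in\mathbb{D}^m(s),(u,t)\in\mathbf{R}\text{ or }(t,u)\in\mathbf{R}\}$. $M$ is a $k$-sight model if whenever $\sigma\sim_w\sigma'$ ($w\in Var$), then $\sigma(w')=\sigma'(w')$ for each $w'\in Var$ with $\sigma(w')\in\mathbb{D}^k(\sigma(w))$. Semantics: $M,\sigma\models K_zz'$ iff $\sigma'(z')=\sigma(z')$ for all $\sigma'\in\Sigma$ with $\sigma'\sim_z\sigma$. For $\sigma,\sigma'\in\mathbf{D}^{Var}$, $\mathsf{R}^z\sigma\sigma'$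 iff $(\sigma(z),\sigma'(z))\in\mathbf{R}$ and $\sigma(z')=\sigma'(z')$ for the other variable $z'$; $\mathsf{R}^z(\Gamma)=\{\sigma':\exists\sigma\in\Gamma,\mathsf{R}^z\sigma\sigma'\}$, $\mathsf{R}^z(\sigma)=\mathsf{R}^z(\{\sigma\})$; $\Sigma|\sigma=\{\sigma'\in\Sigma:\sigma\sim_w\sigma'\text{ for some }w\in Var\}$. $M,\sigma_1\models[z]\varphi$ iff for all $\sigma_2\in\mathsf{R}^z(\sigma_1)$, $(\mathbf{D},\mathbf{I},\Sigma',\sim'),\sigma_2\models\varphi$, where $\Sigma'=\{\sigma_2\}$ if $\sigma_2(x)\in\mathbb{D}^k(\sigma_2(y))$, and otherwise $\Sigma'=\{\sigma'\in\mathsf{R}^z(\Sigma|\sigma_1):\sigma'(x)\notin\mathbb{D}^k(\sigma'(y))\}$; and $\sigma'_1\sim'_w\sigma'_2$ iff $\sigma'_1(w)=\sigma'_2(w)$ for $w\in Var$. *)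

theory Defs
  imports Main
begin

datatype var = Vx | Vy

fun other :: "var \<Rightarrow> var" where
  "other Vx = Vy" | "other Vy = Vx"

type_synonym 'd asg = "var \<Rightarrow> 'd"

definition relOf :: "('p \<Rightarrow> 'd list set) \<Rightarrow> 'p \<Rightarrow> ('d \<times> 'd) set" where
  "relOf Ip Rs = {(a, b). [a, b] \<in> Ip Rs}"

fun Dk :: "('d \<times> 'd) set \<Rightarrow> nat \<Rightarrow> 'd \<Rightarrow> 'd set" where
  "Dk R 0 s = {s}"
| "Dk R (Suc m) s = Dk R m s \<union> {t. \<exists>u \<in> Dk R m s. (u, t) \<in> R \<or> (t, u) \<in> R}"

definition is_model ::
  "'p set \<Rightarrow> ('p \<Rightarrow> nat) \<Rightarrow> 'p \<Rightarrow> 'c set \<Rightarrow>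
   'd set \<Rightarrow> ('p \<Rightarrow> 'd list set) \<Rightarrow> ('c \<Rightarrow> 'd) \<Rightarrow>
   'd asg set \<Rightarrow> (var \<Rightarrow> ('d asg \<times> 'd asg) set) \<Rightarrow> bool" where
  "is_model Pred ar Rs Cst D Ip Ic Sit sim \<longleftrightarrow>
     Rs \<in> Pred \<and> ar Rs = 2 \<and> finite Cst \<and> Cst \<noteq> {} \<and>
     finite D \<and> D \<noteq> {} \<and>
     (\<forall>P \<in> Pred. \<forall>l \<in> Ip P. length l = ar P \<and> set l \<subseteq> D) \<and>
     (\<forall>a \<in> D. \<exists>b. (a, b) \<in> relOf Ip Rs) \<and>
     (\<forall>c \<in> Cst. Ic c \<in> D) \<and> D \<subseteq> Ic ` Cst \<and>
     Sit \<noteq> {} \<and> (\<forall>\<sigma> \<in> Sit. \<forall>w. \<sigma> w \<in> D) \<and>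
     (\<forall>w. equiv Sit (sim w))"

definition k_sight ::
  "nat \<Rightarrow> ('d \<times> 'd) set \<Rightarrow> 'd asg set \<Rightarrow> (var \<Rightarrow> ('d asg \<times> 'd asg) set) \<Rightarrow> bool" where
  "k_sight k R Sit sim \<longleftrightarrow>
     (\<forall>\<sigma> \<sigma>' w. (\<sigma>, \<sigma>') \<in> sim w \<longrightarrow>
        (\<forall>w'. \<sigma> w' \<in> Dk R k (\<sigma> w) \<longrightarrow> \<sigma> w' = \<sigma>' w'))"

definition sat_K ::
  "'d asg set \<Rightarrow> (var \<Rightarrow> ('d asg \<times> 'd asg) set) \<Rightarrow> 'd asg \<Rightarrow> var \<Rightarrow> var \<Rightarrow> bool" where
  "sat_K Sit sim \<sigma> z z' \<longleftrightarrow>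
     (\<forall>\<sigma>' \<in> Sit. (\<sigma>', \<sigma>) \<in> sim z \<longrightarrow> \<sigma>' z' = \<sigma> z')"

definition Rstep :: "('d \<times> 'd) set \<Rightarrow> var \<Rightarrow> 'd asg \<Rightarrow> 'd asg \<Rightarrow> bool" where
  "Rstep R z \<sigma> \<sigma>' \<longleftrightarrow> (\<sigma> z, \<sigma>' z) \<in> R \<and> \<sigma> (other z) = \<sigma>' (other z)"

definition Rimg :: "('d \<times> 'd) set \<Rightarrow> var \<Rightarrow> 'd asg set \<Rightarrow> 'd asg set" where
  "Rimg R z G = {\<sigma>'. \<exists>\<sigma> \<in> G. Rstep R z \<sigma> \<sigma>'}"

definition restrict_sit ::
  "'d asg set \<Rightarrow> (var \<Rightarrow> ('d asg \<times> 'd asg) set) \<Rightarrow> 'd asg \<Rightarrow> 'd asg set" where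
  "restrict_sit Sit sim \<sigma> = {\<sigma>' \<in> Sit. \<exists>w. (\<sigma>, \<sigma>') \<in> sim w}"

definition upd_Sigma ::
  "nat \<Rightarrow> ('d \<times> 'd) set \<Rightarrow> 'd asg set \<Rightarrow> (var \<Rightarrow> ('d asg \<times> 'd asg) set) \<Rightarrow>
   var \<Rightarrow> 'd asg \<Rightarrow> 'd asg \<Rightarrow> 'd asg set" where
  "upd_Sigma k R Sit sim z \<sigma>1 \<sigma>2 =
     (if \<sigma>2 Vx \<in> Dk R k (\<sigma>2 Vy) then {\<sigma>2}
      else {\<sigma>' \<in> Rimg R z (restrict_sit Sit sim \<sigma>1). \<sigma>' Vx \<notin> Dk R k (\<sigma>' Vy)})"

definition upd_sim :: "var \<Rightarrow> ('d asg \<times> 'd asg) set" where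
  "upd_sim w = {(a, b). a w = b w}"

definition sat_box_K ::
  "nat \<Rightarrow> ('d \<times> 'd) set \<Rightarrow> 'd asg set \<Rightarrow> (var \<Rightarrow> ('d asg \<times> 'd asg) set) \<Rightarrow>
   'd asg \<Rightarrow> var \<Rightarrow> var \<Rightarrow> bool" where
  "sat_box_K k R Sit sim \<sigma>1 z z' \<longleftrightarrow>
     (\<forall>\<sigma>2 \<in> Rimg R z {\<sigma>1}. sat_K (upd_Sigma k R Sit sim z \<sigma>1 \<sigma>2) upd_sim \<sigma>2 z z')"

end

theory Submission
  imports Defs
begin

text \<open>Every situation linked to \<open>\<sigma>\<close> agrees with \<open>\<sigma>\<close> on \<open>z'\<close>: along \<open>\<sim>\<^sub>z\<close> because
  \<open>\<sigma>\<close> knows \<open>z'\<close>, along \<open>\<sim>\<^sub>z\<^sub>'\<close> by \<open>k\<close>-sight, since \<open>\<sigma>(z') \<in> \<bbbD>\<^sup>k(\<sigma>(z'))\<close>.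
  A move along \<open>z\<close> does not change \<open>z'\<close>, so after the move all situations of the updated
  model agree with the new actual situation on \<open>z'\<close>, and \<open>K\<^sub>zz'\<close> holds there trivially.\<close>

lemma Dk_refl: "s \<in> Dk R k s"
  by (induction k) auto

lemma other_if_neq: "z' \<noteq> z \<Longrightarrow> z' = other z"
  by (cases z; cases z') auto

lemma var_cases_other: "w = z \<or> w = other z"
  by (cases w; cases z) auto

lemma Rstep_other: "Rstep R z \<sigma> \<sigma>' \<Longrightarrow> \<sigma>' (other z) = \<sigma> (other z)"
  unfolding Rstep_def by simp

lemma Rimg_other_const:
  assumes "\<sigma>' \<in> Rimg R z G" and "\<And>\<tau>. \<tau> \<in> G \<Longrightarrow> \<tau> (other z) = a"
  shows "\<sigma>' (other z) = a"
  using assms Rstep_other unfolding Rimg_def by fastforce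

lemma k_sight_sim_self:
  assumes "k_sight k R Sit sim" and "(\<sigma>, \<tau>) \<in> sim w"
  shows "\<tau> w = \<sigma> w"
  using assms Dk_refl unfolding k_sight_def by metis

lemma sat_K_if_const:
  assumes "\<And>\<tau>. \<tau> \<in> Sit \<Longrightarrow> \<tau> z' = \<sigma> z'"
  shows "sat_K Sit sim \<sigma> z z'"
  using assms unfolding sat_K_def by blast

lemma restrict_sit_other_const:
  assumes "sym (sim z)" and "k_sight k R Sit sim" and "sat_K Sit sim \<sigma> z (other z)"
    and "\<tau> \<in> restrict_sit Sit sim \<sigma>"
  shows "\<tau> (other z) = \<sigma> (other z)"
proof -
  obtain w where \<tau>: "\<tau> \<in> Sit" "(\<sigma>, \<tau>) \<in> sim w"
    using assms(4) unfolding restrict_sit_def by blast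
  consider "w = z" | "w = other z" using var_cases_other by blast
  then show ?thesis
  proof cases
    case 1
    with \<tau> assms(1) have "(\<tau>, \<sigma>) \<in> sim z" by (blast dest: symD)
    with \<tau>(1) assms(3) show ?thesis unfolding sat_K_def by blast
  next
    case 2
    with \<tau>(2) assms(2) show ?thesis by (metis k_sight_sim_self)
  qed
qed

lemma upd_Sigma_other_const:
  assumes "\<And>\<tau>. \<tau> \<in> restrict_sit Sit sim \<sigma>1 \<Longrightarrow> \<tau> (other z) = \<sigma>1 (other z)"
    and "\<sigma>2 \<in> Rimg R z {\<sigma>1}" and "\<sigma>' \<in> upd_Sigma k R Sit sim z \<sigma>1 \<sigma>2"
  shows "\<sigma>' (other z) = \<sigma>2 (other z)"
proof (cases "\<sigma>2 Vx \<in> Dk R k (\<sigma>2 Vy)")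
  case True
  with assms(3) show ?thesis unfolding upd_Sigma_def by simp
next
  case False
  with assms(3) have "\<sigma>' \<in> Rimg R z (restrict_sit Sit sim \<sigma>1)"
    unfolding upd_Sigma_def by simp
  then have "\<sigma>' (other z) = \<sigma>1 (other z)"
    using assms(1) by (rule Rimg_other_const)
  moreover have "\<sigma>2 (other z) = \<sigma>1 (other z)"
    using assms(2) by (rule Rimg_other_const) simp
  ultimately show ?thesis by simp
qed

theorem fact6:
  fixes Pred :: "'p set" and ar :: "'p \<Rightarrow> nat" and Rs :: 'p and Cst :: "'c set"
    and D :: "'d set" and Ip :: "'p \<Rightarrow> 'd list set" and Ic :: "'c \<Rightarrow> 'd"
    and Sit :: "'d asg set" and sim :: "var \<Rightarrow> ('d asg \<times> 'd asg) set"
    and k :: nat and \<sigma> :: "'d asg" and z z' :: var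
  assumes "is_model Pred ar Rs Cst D Ip Ic Sit sim"
    and "k_sight k (relOf Ip Rs) Sit sim"
    and "\<sigma> \<in> Sit"
    and "z' \<noteq> z"
    and "sat_K Sit sim \<sigma> z z'"
  shows "sat_box_K k (relOf Ip Rs) Sit sim \<sigma> z z'"
proof -
  have z': "z' = other z" using assms(4) by (rule other_if_neq)
  have "sym (sim z)"
    using assms(1) unfolding is_model_def equiv_def by blast
  then have linked: "\<tau> (other z) = \<sigma> (other z)" if "\<tau> \<in> restrict_sit Sit sim \<sigma>" for \<tau>
    using assms(2,5) that unfolding z' by (rule restrict_sit_other_const)
  show ?thesis
    unfolding sat_box_K_def z'
  proof
    fix \<sigma>2 assume "\<sigma>2 \<in> Rimg (relOf Ip Rs) z {\<sigma>}"
    then show "sat_K (upd_Sigma k (relOf Ip Rs) Sit sim z \<sigma> \<sigma>2) upd_sim \<sigma>2 z (other z)"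
      using linked upd_Sigma_other_const sat_K_if_const by metis
  qed
qed

end
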